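(* Let $X$ be a convex metric space over a Boolean ring $B$, $0\in X$, and suppose every element of $X$ is a convex combination of elements of $\{0,x_{1},\dots,x_{n}\}\subseteq X$, where $\{x_{1},\dots,x_{s}\}$ ($s\le n$) is an orthogonal set. Then there exist $a_{s+1},\dots,a_{n}\in B$ such that $\{x_{1},\dots,x_{s},a_{s+1}x_{s+1},\dots,a_{n}x_{n}\}\setminus\{0\}$ is a referential of $(X,0)$. In particular, every orthogonal subset of a pointed CFG-space $(X,0)$ can be extended to a referential of $(X,0)$.
   Context: $B$ is a Boolean ring ($a\vee b=a+b+ab$, $a\le b\iff ab=a$, $\bar a=1+a$; $a_1\oplus\cdots\oplus a_n$ denotes a sum of pairwise disjoint elements). A Boolean metric space over $B$: set $X$ with $d:X\times X\to B$, $d(x,y)=0\iff x=y$, symmetric, $d(x,z)\le d(x,y)\vee d(y,z)$. For $y_1,\dots,y_m\in X$, $b_i\in B$ with $b_1\oplus\cdots\oplus b_m=1$, $y$ is a convex combination of the $y_i$ with coefficients $b_i$ if $b_id(y,y_i)=0$ for all $i$; $X$ is convex if all such combinations exist; a CFG-space is a convex space all of whose elements are convex combinations of elements of some fixed finite subset. In $(X,0)$: $|x|=d(0,x)$; for $a\in B$, $ax$ denotes the convex combination of $x,0$ with coefficients $a,\bar a$. $x\perp y$ iff $d(x,y)=|x|\vee|y|$; a finite $R\subseteq X$ is orthogonal if $0\notin R$ and distinct elements are orthogonal; a referential of $(X,0)$ is an orthogonal $R$ such that every element of $X$ is a convex combination of elements of $R\cup\{0\}$. *)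

theory Defs
  imports Main
begin

definition boolean_ring :: "'b::comm_ring_1 itself \<Rightarrow> bool" where
  "boolean_ring _ \<longleftrightarrow> (\<forall>a::'b. a * a = a)"

definition bjoin :: "'b::comm_ring_1 \<Rightarrow> 'b \<Rightarrow> 'b" where
  "bjoin a b = a + b + a * b"

definition ble :: "'b::comm_ring_1 \<Rightarrow> 'b \<Rightarrow> bool" where
  "ble a b \<longleftrightarrow> a * b = a"

definition bmetric :: "'x set \<Rightarrow> ('x \<Rightarrow> 'x \<Rightarrow> 'b::comm_ring_1) \<Rightarrow> bool" where
  "bmetric X d \<longleftrightarrow>
     (\<forall>x\<in>X. \<forall>y\<in>X. d x y = 0 \<longleftrightarrow> x = y) \<and>
     (\<forall>x\<in>X. \<forall>y\<in>X. d x y = d y x) \<and>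
     (\<forall>x\<in>X. \<forall>y\<in>X. \<forall>z\<in>X. ble (d x z) (bjoin (d x y) (d y z)))"

definition partition_unity :: "nat \<Rightarrow> (nat \<Rightarrow> 'b::comm_ring_1) \<Rightarrow> bool" where
  "partition_unity m b \<longleftrightarrow>
     (\<forall>i<m. \<forall>j<m. i \<noteq> j \<longrightarrow> b i * b j = 0) \<and> (\<Sum>i<m. b i) = 1"

definition is_cc :: "('x \<Rightarrow> 'x \<Rightarrow> 'b::comm_ring_1) \<Rightarrow> 'x \<Rightarrow> nat \<Rightarrow> (nat \<Rightarrow> 'x) \<Rightarrow> (nat \<Rightarrow> 'b) \<Rightarrow> bool" where
  "is_cc d y m ys b \<longleftrightarrow> partition_unity m b \<and> (\<forall>i<m. b i * d y (ys i) = 0)"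

definition bconvex :: "'x set \<Rightarrow> ('x \<Rightarrow> 'x \<Rightarrow> 'b::comm_ring_1) \<Rightarrow> bool" where
  "bconvex X d \<longleftrightarrow>
     (\<forall>m ys b. (\<forall>i<m. ys i \<in> X) \<and> partition_unity m b \<longrightarrow> (\<exists>y\<in>X. is_cc d y m ys b))"

definition cc_of :: "('x \<Rightarrow> 'x \<Rightarrow> 'b::comm_ring_1) \<Rightarrow> 'x set \<Rightarrow> 'x \<Rightarrow> bool" where
  "cc_of d S y \<longleftrightarrow> (\<exists>m ys b. (\<forall>i<m. ys i \<in> S) \<and> is_cc d y m ys b)"

definition cfg_space :: "'x set \<Rightarrow> ('x \<Rightarrow> 'x \<Rightarrow> 'b::comm_ring_1) \<Rightarrow> bool" where
  "cfg_space X d \<longleftrightarrow> bconvex X d \<and>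
     (\<exists>F. finite F \<and> F \<subseteq> X \<and> (\<forall>y\<in>X. cc_of d F y))"

text \<open>Pointed space (X, z): |x| = d(z,x); a x = convex combination of x, z with coefficients a, 1+a
 (unique in a metric space).\<close>
definition bnorm :: "('x \<Rightarrow> 'x \<Rightarrow> 'b::comm_ring_1) \<Rightarrow> 'x \<Rightarrow> 'x \<Rightarrow> 'b" where
  "bnorm d z x = d z x"

definition bsmul :: "'x set \<Rightarrow> ('x \<Rightarrow> 'x \<Rightarrow> 'b::comm_ring_1) \<Rightarrow> 'x \<Rightarrow> 'b \<Rightarrow> 'x \<Rightarrow> 'x" where
  "bsmul X d z a x = (THE y. y \<in> X \<and> a * d y x = 0 \<and> (1 + a) * d y z = 0)"

definition borth :: "('x \<Rightarrow> 'x \<Rightarrow> 'b::comm_ring_1) \<Rightarrow> 'x \<Rightarrow> 'x \<Rightarrow> 'x \<Rightarrow> bool" where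
  "borth d z x y \<longleftrightarrow> d x y = bjoin (bnorm d z x) (bnorm d z y)"

definition orthogonal_set :: "'x set \<Rightarrow> ('x \<Rightarrow> 'x \<Rightarrow> 'b::comm_ring_1) \<Rightarrow> 'x \<Rightarrow> 'x set \<Rightarrow> bool" where
  "orthogonal_set X d z R \<longleftrightarrow> finite R \<and> R \<subseteq> X \<and> z \<notin> R \<and>
     (\<forall>x\<in>R. \<forall>y\<in>R. x \<noteq> y \<longrightarrow> borth d z x y)"

definition referential :: "'x set \<Rightarrow> ('x \<Rightarrow> 'x \<Rightarrow> 'b::comm_ring_1) \<Rightarrow> 'x \<Rightarrow> 'x set \<Rightarrow> bool" where
  "referential X d z R \<longleftrightarrow> orthogonal_set X d z R \<and> (\<forall>y\<in>X. cc_of d (R \<union> {z}) y)"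

end

theory Submission imports Defs begin

(* For i > s put a_i = \<Prod>_{j<i} d(x_i, x_j), the "novelty" of x_i: the part of B on which x_i
   differs from every earlier x_j.  Then x_1, ..., x_s, a_{s+1} x_{s+1}, ..., a_n x_n (with z removed)
   is a referential:
   - orthogonality: if U = a u and V = b v then d(U,V) = ab d(u,v) + a(1+b)|u| + (1+a)b|v|,
     so U \<perp> V as soon as ab(1 + d(u,v)) = 0, which the novelty weights guarantee;
   - spanning: by strong induction every x_i is a convex combination of the new points: on a_i it
     coincides with a_i x_i, and on 1 + a_i it coincides, piece by piece, with earlier x_j.
   The spanning argument works with "partial" convex combinations whose weights add up to some
   c \<in> B instead of 1 (cc_on); these can be restricted, glued along disjoint weights, transferred
   to points coinciding on c, and composed. *)

lemma sum_lessThan_add: "(\<Sum>i<m1+m2::nat. f i) = (\<Sum>i<m1. f i) + (\<Sum>j<m2. f (m1+j))"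
  by (induction m2) (simp_all add: add.assoc)

lemma mem_image_nth_shift: "x \<in> (\<lambda>i. ys ! (i - 1)) ` {1..k} \<longleftrightarrow> (\<exists>j<k. ys ! j = x)"
proof
  assume "x \<in> (\<lambda>i. ys ! (i - 1)) ` {1..k}"
  then obtain i where "i \<in> {1..k}" "x = ys ! (i - 1)" by blast
  thus "\<exists>j<k. ys ! j = x" by (intro exI[of _ "i - 1"]) auto
next
  assume "\<exists>j<k. ys ! j = x"
  then obtain j where "j < k" "x = ys ! (Suc j - 1)" by auto
  thus "x \<in> (\<lambda>i. ys ! (i - 1)) ` {1..k}" by (intro image_eqI[of _ _ "Suc j"]) auto
qed

lemma image_nth_shift_take:
  assumes "k \<le> length ys"
  shows "(\<lambda>i. ys ! (i - 1)) ` {1..k} = set (take k ys)"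
proof (rule set_eqI)
  fix x
  have "x \<in> set (take k ys) \<longleftrightarrow> (\<exists>j<k. ys ! j = x)"
    using assms by (auto simp: in_set_conv_nth)
  thus "x \<in> (\<lambda>i. ys ! (i - 1)) ` {1..k} \<longleftrightarrow> x \<in> set (take k ys)"
    by (simp only: mem_image_nth_shift)
qed

definition cc_on :: "('x \<Rightarrow> 'x \<Rightarrow> 'b::comm_ring_1) \<Rightarrow> 'x set \<Rightarrow> 'x \<Rightarrow> 'b \<Rightarrow> bool" where
  "cc_on d S y c \<longleftrightarrow> (\<exists>(m::nat) ys b. (\<forall>i<m. ys i \<in> S)
      \<and> (\<forall>i<m. \<forall>j<m. i \<noteq> j \<longrightarrow> b i * b j = 0)
      \<and> (\<Sum>i<m. b i) = c \<and> (\<forall>i<m. b i * d y (ys i) = 0))"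

lemma cc_of_iff_cc_on: "cc_of d S y \<longleftrightarrow> cc_on d S y 1"
  unfolding cc_of_def cc_on_def is_cc_def partition_unity_def by blast

lemma cc_of_mono: "S \<subseteq> S' \<Longrightarrow> cc_of d S y \<Longrightarrow> cc_of d S' y"
  unfolding cc_of_def by blast

lemma cc_on_zero: "cc_on d S y 0"
  unfolding cc_on_def by (rule exI[of _ 0]) simp

lemma cc_on_single: "s \<in> S \<Longrightarrow> c * d y s = 0 \<Longrightarrow> cc_on d S y c"
  unfolding cc_on_def
  by (rule exI[of _ 1], rule exI[of _ "\<lambda>_. s"], rule exI[of _ "\<lambda>_. c"]) simp

locale boolean_metric_space =
  fixes X :: "'x set" and d :: "'x \<Rightarrow> 'x \<Rightarrow> 'b::comm_ring_1"
  assumes idem: "\<And>a::'b. a * a = a"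
    and metric: "bmetric X d"
begin

lemma add_self: "(a::'b) + a = 0"
proof -
  have "(a + a) * (a + a) = a * a + a * a + (a * a + a * a)"
    by (simp add: distrib_left distrib_right add.assoc)
  hence "(a + a) + (a + a) = (a + a) + 0" by (simp only: idem add_0_right)
  thus ?thesis by (rule add_left_imp_eq)
qed

lemma idem_left: "(a::'b) * (a * b) = a * b" by (simp add: mult.assoc[symmetric] idem)
lemma add_self_left: "(a::'b) + (a + b) = b" by (simp add: add.assoc[symmetric] add_self)
lemma minus_self: "- (a::'b) = a" using add_self by (rule minus_unique)
lemma diff_is_add: "(a::'b) - b = a + b" by (simp add: minus_self)

lemmas bool_simps = algebra_simps idem idem_left add_self add_self_left minus_self diff_is_add

lemma complement_disjoint: "(1 + a) * (a::'b) = 0"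
  by (simp add: bool_simps)

lemma add_eq_0_imp_eq: "(x::'b) + y = 0 \<Longrightarrow> x = y"
  by (metis add_left_imp_eq add_self)

lemma eq_by_split:
  assumes "c * (x::'b) = c * y" and "(1 + c) * x = (1 + c) * y"
  shows "x = y"
proof -
  have "x = c * x + (1 + c) * x" by (simp add: bool_simps)
  also have "\<dots> = c * y + (1 + c) * y" using assms by simp
  also have "\<dots> = y" by (simp add: bool_simps)
  finally show ?thesis .
qed

lemma vanish_mult_right: "(c::'b) * t = 0 \<Longrightarrow> (c * e) * t = 0"
  by (metis mult.assoc mult.commute mult_zero_right)
lemma vanish_mult_left: "(c::'b) * t = 0 \<Longrightarrow> (e * c) * t = 0"
  by (metis mult.assoc mult_zero_right)

lemma disjoint_mult_sum:
  fixes m :: nat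
  assumes "\<forall>i<m. \<forall>j<m. i \<noteq> j \<longrightarrow> b i * b j = (0::'b)" and "i < m"
  shows "b i * (\<Sum>j<m. b j) = b i"
proof -
  have "b i * (\<Sum>j<m. b j) = (\<Sum>j<m. b i * b j)" by (simp add: sum_distrib_left)
  also have "\<dots> = b i * b i + (\<Sum>j\<in>{..<m}-{i}. b i * b j)"
    using assms(2) by (simp add: sum.remove)
  also have "(\<Sum>j\<in>{..<m}-{i}. b i * b j) = 0" using assms by (intro sum.neutral) auto
  finally show ?thesis by (simp add: idem)
qed

text \<open>Metric axioms, with the triangle inequality \<open>d x w \<le> d x y \<or> d y w\<close> written out.\<close>

lemma dist_eq_0: "x \<in> X \<Longrightarrow> y \<in> X \<Longrightarrow> d x y = 0 \<longleftrightarrow> x = y"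
  using metric unfolding bmetric_def by blast
lemma dist_sym: "x \<in> X \<Longrightarrow> y \<in> X \<Longrightarrow> d x y = d y x"
  using metric unfolding bmetric_def by blast
lemma dist_self: "x \<in> X \<Longrightarrow> d x x = 0"
  using dist_eq_0 by blast
lemma triangle:
  "x \<in> X \<Longrightarrow> y \<in> X \<Longrightarrow> w \<in> X \<Longrightarrow> d x w * (d x y + d y w + d x y * d y w) = d x w"
  using metric unfolding bmetric_def ble_def bjoin_def by blast

text \<open>"x and y coincide on c" (c * d x y = 0) is transitive.\<close>
lemma coincide_trans:
  assumes "x \<in> X" "y \<in> X" "w \<in> X" "c * d x y = 0" "c * d y w = 0"
  shows "c * d x w = 0"
proof -
  have "c * d x w = c * (d x w * (d x y + d y w + d x y * d y w))" using triangle assms by simp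
  also have "\<dots> = d x w * (c * d x y) + d x w * (c * d y w) + d x w * (c * d x y) * d y w"
    by (simp add: algebra_simps)
  also have "\<dots> = 0" using assms by simp
  finally show ?thesis .
qed

lemma dist_coincide:
  assumes "x \<in> X" "p \<in> X" "q \<in> X" "c * d p q = 0"
  shows "c * d x p = c * d x q"
proof -
  have absorb: "c * d x p = c * d x p * d x q" if "p \<in> X" "q \<in> X" "c * d p q = 0" for p q
  proof -
    have qp: "c * d q p = 0" using that dist_sym by simp
    have "c * d x p = c * (d x p * (d x q + d q p + d x q * d q p))"
      using triangle assms that by simp
    also have "\<dots> = c * d x p * d x q + d x p * (c * d q p) + d x p * d x q * (c * d q p)"
      by (simp add: algebra_simps)
    finally show ?thesis using qp by simp
  qed
  have qp: "c * d q p = 0" using assms dist_sym by simp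
  have "c * d x p = c * d x p * d x q" using assms(2-4) by (rule absorb)
  also have "\<dots> = c * d x q * d x p" by (simp add: ac_simps)
  also have "\<dots> = c * d x q" using assms(3,2) qp by (rule absorb[symmetric])
  finally show ?thesis .
qed

lemma dist_coincide2:
  assumes "U \<in> X" "u \<in> X" "V \<in> X" "v \<in> X" "c * d U u = 0" "c * d V v = 0"
  shows "c * d U V = c * d u v"
  using dist_coincide[of U V v c] dist_coincide[of v U u c] dist_sym assms by metis

lemma cc_on_restrict:
  assumes "cc_on d S y c" shows "cc_on d S y (c * e)"
proof -
  obtain m :: nat and ys b where h: "\<forall>i<m. ys i \<in> S" "\<forall>i<m. \<forall>j<m. i \<noteq> j \<longrightarrow> b i * b j = 0"
      "(\<Sum>i<m. b i) = c" "\<forall>i<m. b i * d y (ys i) = 0"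
    using assms unfolding cc_on_def by blast
  have "(b i * e) * (b j * e) = 0" if "i < m" "j < m" "i \<noteq> j" for i j
  proof -
    have "(b i * e) * (b j * e) = (b i * b j) * e" by (simp add: bool_simps)
    thus ?thesis using h(2) that by simp
  qed
  moreover have "(\<Sum>i<m. b i * e) = c * e" by (metis h(3) sum_distrib_right)
  moreover have "\<forall>i<m. (b i * e) * d y (ys i) = 0" using h(4) by (simp add: vanish_mult_right)
  ultimately show ?thesis unfolding cc_on_def using h(1)
    by (intro exI[of _ m] exI[of _ ys] exI[of _ "\<lambda>i. b i * e"]) simp
qed

lemma cc_on_add:
  assumes cc1: "cc_on d S y c1" and cc2: "cc_on d S y c2" and disj: "c1 * c2 = 0"
  shows "cc_on d S y (c1 + c2)"
proof -
  obtain m1 :: nat and ys1 b1 where h1: "\<forall>i<m1. ys1 i \<in> S"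
      "\<forall>i<m1. \<forall>j<m1. i \<noteq> j \<longrightarrow> b1 i * b1 j = 0" "(\<Sum>i<m1. b1 i) = c1" "\<forall>i<m1. b1 i * d y (ys1 i) = 0"
    using cc1 unfolding cc_on_def by blast
  obtain m2 :: nat and ys2 b2 where h2: "\<forall>i<m2. ys2 i \<in> S"
      "\<forall>i<m2. \<forall>j<m2. i \<noteq> j \<longrightarrow> b2 i * b2 j = 0" "(\<Sum>i<m2. b2 i) = c2" "\<forall>i<m2. b2 i * d y (ys2 i) = 0"
    using cc2 unfolding cc_on_def by blast
  define ys where "ys i = (if i < m1 then ys1 i else ys2 (i - m1))" for i
  define b where "b i = (if i < m1 then b1 i else b2 (i - m1))" for i
  have cross: "b1 i * b2 j = 0" if "i < m1" "j < m2" for i j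
  proof -
    have "b1 i * b2 j = (b1 i * c1) * (b2 j * c2)"
      using disjoint_mult_sum[OF h1(2) that(1)] disjoint_mult_sum[OF h2(2) that(2)] h1(3) h2(3)
      by simp
    also have "\<dots> = (b1 i * b2 j) * (c1 * c2)" by (simp add: algebra_simps)
    finally show ?thesis using disj by simp
  qed
  have "b i * b j = 0" if "i < m1 + m2" "j < m1 + m2" "i \<noteq> j" for i j
    using that h1(2) h2(2) cross[of i "j - m1"] cross[of j "i - m1"]
    by (cases "i < m1"; cases "j < m1") (auto simp: b_def mult.commute)
  moreover have "(\<Sum>i<m1+m2. b i) = c1 + c2"
    using h1(3) h2(3) by (simp add: sum_lessThan_add b_def)
  moreover have "\<forall>i<m1+m2. ys i \<in> S" "\<forall>i<m1+m2. b i * d y (ys i) = 0"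
    using h1(1,4) h2(1,4) by (auto simp: b_def ys_def)
  ultimately show ?thesis unfolding cc_on_def
    by (intro exI[of _ "m1+m2"] exI[of _ ys] exI[of _ b]) simp
qed

lemma cc_on_transfer:
  assumes "S \<subseteq> X" "y \<in> X" "y' \<in> X" "cc_on d S y' c" "c * d y y' = 0"
  shows "cc_on d S y c"
proof -
  obtain m :: nat and ys b where h: "\<forall>i<m. ys i \<in> S" "\<forall>i<m. \<forall>j<m. i \<noteq> j \<longrightarrow> b i * b j = 0"
      "(\<Sum>i<m. b i) = c" "\<forall>i<m. b i * d y' (ys i) = 0"
    using assms unfolding cc_on_def by blast
  have "b i * d y (ys i) = 0" if i: "i < m" for i
  proof -
    have "b i * d y y' = (b i * c) * d y y'" using disjoint_mult_sum[OF h(2) i] h(3) by simp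
    also have "\<dots> = b i * (c * d y y')" by (simp add: mult.assoc)
    finally have "b i * d y y' = 0" using assms by simp
    thus ?thesis using coincide_trans[of y y' "ys i" "b i"] assms h i by auto
  qed
  thus ?thesis unfolding cc_on_def using h by blast
qed

lemma cc_on_compose:
  assumes SX: "S \<subseteq> X" and TX: "T \<subseteq> X" and yX: "y \<in> X"
    and T_in_S: "\<forall>t\<in>T. cc_on d S t 1" and "cc_on d T y c"
  shows "cc_on d S y c"
proof -
  have "cc_on d S y (\<Sum>i<m. b i)"
    if "\<forall>i<m. ys i \<in> T" "\<forall>i<m. \<forall>j<m. i \<noteq> j \<longrightarrow> b i * b j = 0" "\<forall>i<m. b i * d y (ys i) = 0"
    for m :: nat and ys b
    using that
  proof (induction m)
    case 0 thus ?case using cc_on_zero by simp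
  next
    case (Suc m)
    have IH: "cc_on d S y (\<Sum>i<m. b i)" using Suc by simp
    have "cc_on d S (ys m) (1 * b m)" using Suc.prems T_in_S by (intro cc_on_restrict) simp
    hence last: "cc_on d S y (b m)"
      using cc_on_transfer[of S y "ys m" "b m"] Suc.prems SX TX yX by auto
    have "(\<Sum>i<m. b i) * b m = (\<Sum>i<m. b i * b m)" by (simp add: sum_distrib_right)
    also have "\<dots> = 0" using Suc.prems(2) by (intro sum.neutral) auto
    finally show ?case using cc_on_add[OF IH last] by simp
  qed
  thus ?thesis using assms(5) unfolding cc_on_def by blast
qed

definition novelty :: "(nat \<Rightarrow> 'x) \<Rightarrow> nat \<Rightarrow> 'b" where
  "novelty xs i = (\<Prod>j\<in>{1..<i}. d (xs i) (xs j))"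

lemma novelty_coincide:
  assumes "j \<in> {1..<i}"
  shows "novelty xs i * (1 + d (xs i) (xs j)) = 0"
proof -
  let ?D = "d (xs i) (xs j)"
  have "novelty xs i = ?D * (\<Prod>k\<in>{1..<i}-{j}. d (xs i) (xs k))"
    unfolding novelty_def using assms by (simp add: prod.remove)
  hence "novelty xs i * (1 + ?D) = (\<Prod>k\<in>{1..<i}-{j}. d (xs i) (xs k)) * (?D * (1 + ?D))"
    by (simp add: algebra_simps)
  also have "?D * (1 + ?D) = 0" by (simp add: bool_simps)
  finally show ?thesis by simp
qed

text \<open>Outside \<open>\<Prod>_j d(y, w_j)\<close> the point y coincides piecewise with the w_j, so it inherits
  their convex representations there.\<close>
lemma cc_on_complement_prod:
  assumes "finite J" "S \<subseteq> X" "y \<in> X" "\<forall>j\<in>J. w j \<in> X \<and> cc_on d S (w j) 1"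
  shows "cc_on d S y (1 + (\<Prod>j\<in>J. d y (w j)))"
  using assms(1,4)
proof (induction J rule: finite_induct)
  case empty
  show ?case using cc_on_zero add_self[of 1] by simp
next
  case (insert j J)
  let ?P = "\<Prod>k\<in>J. d y (w k)" and ?D = "d y (w j)"
  have IH: "cc_on d S y (1 + ?P)" using insert by simp
  have wj: "w j \<in> X" "cc_on d S (w j) 1" using insert.prems by auto
  have "cc_on d S (w j) (1 * (?P * (1 + ?D)))" using wj(2) by (rule cc_on_restrict)
  moreover have "(?P * (1 + ?D)) * d y (w j) = 0" by (simp add: bool_simps)
  ultimately have new: "cc_on d S y (?P * (1 + ?D))"
    using cc_on_transfer[OF assms(2,3) wj(1)] by simp
  have "(1 + ?P) * (?P * (1 + ?D)) = 0" by (simp add: bool_simps)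
  from cc_on_add[OF IH new this] have "cc_on d S y ((1 + ?P) + ?P * (1 + ?D))" .
  moreover have "(1 + ?P) + ?P * (1 + ?D) = 1 + ?D * ?P" by (simp add: bool_simps)
  ultimately show ?case using insert.hyps by simp
qed

end

locale pointed_convex_space = boolean_metric_space X d
  for X :: "'x set" and d :: "'x \<Rightarrow> 'x \<Rightarrow> 'b::comm_ring_1" +
  fixes z :: 'x
  assumes convex: "bconvex X d" and base: "z \<in> X"
begin

text \<open>\<open>scaled a U u\<close>: U is the point a u, coinciding with u on a and with z on 1 + a.\<close>
definition scaled :: "'b \<Rightarrow> 'x \<Rightarrow> 'x \<Rightarrow> bool" where
  "scaled a U u \<longleftrightarrow> U \<in> X \<and> u \<in> X \<and> a * d U u = 0 \<and> (1 + a) * d U z = 0"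

text \<open>By convexity a u exists (a, 1 + a is a partition of unity), and it is unique; hence
  \<open>bsmul\<close> is the point a u.\<close>
lemma scaled_exists:
  assumes "u \<in> X" shows "\<exists>y. scaled a y u"
proof -
  define ys where "ys = (\<lambda>i::nat. if i = 0 then u else z)"
  define b where "b = (\<lambda>i::nat. if i = 0 then a else 1 + a)"
  have "partition_unity 2 b"
    unfolding partition_unity_def
  proof (intro conjI allI impI)
    fix i j :: nat assume "i < 2" "j < 2" "i \<noteq> j"
    hence "(i = 0 \<and> j = 1) \<or> (i = 1 \<and> j = 0)" by auto
    thus "b i * b j = 0" by (auto simp: b_def bool_simps)
  qed (simp add: numeral_2_eq_2 b_def bool_simps)
  moreover have "\<forall>i<2. ys i \<in> X" using assms base by (simp add: ys_def)
  ultimately obtain y where y: "y \<in> X" "is_cc d y 2 ys b" using convex unfolding bconvex_def by blast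
  hence "b 0 * d y (ys 0) = 0" "b 1 * d y (ys 1) = 0" unfolding is_cc_def by auto
  hence "scaled a y u" using y(1) assms unfolding scaled_def by (simp add: b_def ys_def)
  thus ?thesis ..
qed

lemma scaled_unique:
  assumes "scaled a y u" "scaled a y' u"
  shows "y = y'"
proof -
  have X: "y \<in> X" "y' \<in> X" "u \<in> X" using assms unfolding scaled_def by auto
  have "a * d y y' = a * d y u"
    using dist_coincide[of y y' u a] assms X dist_sym unfolding scaled_def by simp
  hence on_a: "a * d y y' = a * 0" using assms unfolding scaled_def by simp
  have "(1 + a) * d y y' = (1 + a) * d y z"
    using dist_coincide[of y y' z "1 + a"] assms X dist_sym base unfolding scaled_def by simp
  hence off_a: "(1 + a) * d y y' = (1 + a) * 0" using assms unfolding scaled_def by simp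
  show ?thesis using eq_by_split[OF on_a off_a] dist_eq_0 X by simp
qed

lemma scaled_bsmul:
  assumes "u \<in> X" shows "scaled a (bsmul X d z a u) u"
proof -
  have "\<exists>!y. scaled a y u" using scaled_exists[OF assms] scaled_unique by blast
  hence "scaled a (THE y. scaled a y u) u" by (rule theI')
  moreover have "(THE y. scaled a y u) = bsmul X d z a u"
    unfolding bsmul_def scaled_def using assms by simp
  ultimately show ?thesis by simp
qed

lemma scaled_one: "u \<in> X \<Longrightarrow> scaled 1 u u"
  unfolding scaled_def using dist_self by (simp add: bool_simps)

lemma norm_scaled:
  assumes "scaled a U u" shows "d z U = a * d z u"
proof (rule eq_by_split[of a])
  have "a * d z U = a * d z u"
    using dist_coincide[of z U u a] assms base unfolding scaled_def by simp
  thus "a * d z U = a * (a * d z u)" by (simp add: idem_left)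
  have "(1 + a) * d z U = (1 + a) * d U z" using dist_sym assms base unfolding scaled_def by simp
  also have "\<dots> = 0" using assms unfolding scaled_def by simp
  finally show "(1 + a) * d z U = (1 + a) * (a * d z u)" by (simp add: bool_simps)
qed

lemma dist_scaled:
  assumes sa: "scaled a U u" and sb: "scaled b V v"
  shows "d U V = a*b*d u v + a*(1+b)*d z u + (1+a)*b*d z v"
proof -
  have X: "U \<in> X" "u \<in> X" "V \<in> X" "v \<in> X" using assms unfolding scaled_def by auto
  have Uu: "a * d U u = 0" and Uz: "(1+a) * d U z = 0" using sa unfolding scaled_def by auto
  have Vv: "b * d V v = 0" and Vz: "(1+b) * d V z = 0" using sb unfolding scaled_def by auto
  have "a*b*d U V = a*b*d u v"
    using dist_coincide2[OF X] Uu Vv by (simp add: vanish_mult_right vanish_mult_left)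
  moreover have "a*(1+b)*d U V = a*(1+b)*d z u"
    using dist_coincide2[of U u V z] X base dist_sym[of u z] Uu Vz
    by (simp add: vanish_mult_right vanish_mult_left)
  moreover have "(1+a)*b*d U V = (1+a)*b*d z v"
    using dist_coincide2[of U z V v] X base Uz Vv by (simp add: vanish_mult_right vanish_mult_left)
  moreover have "(1+a)*(1+b)*d U V = 0"
    using dist_coincide2[of U z V z] X base dist_self Uz Vz
    by (simp add: vanish_mult_right vanish_mult_left)
  moreover have "d U V = a*b*d U V + a*(1+b)*d U V + (1+a)*b*d U V + (1+a)*(1+b)*d U V"
    by (simp add: bool_simps)
  ultimately show ?thesis by simp
qed

lemma borth_sym: "U \<in> X \<Longrightarrow> V \<in> X \<Longrightarrow> borth d z U V \<Longrightarrow> borth d z V U"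
  unfolding borth_def bjoin_def using dist_sym by (simp add: algebra_simps)

lemma orth_scaled:
  assumes sa: "scaled a U u" and sb: "scaled b V v" and coincide: "a*b*(1 + d u v) = 0"
  shows "borth d z U V"
proof -
  have X: "u \<in> X" "v \<in> X" using assms unfolding scaled_def by auto
  define D where "D = d u v"
  define P where "P = d z u"
  define Q where "Q = d z v"
  have tri: "D * (P + Q + P*Q) = D"
    using triangle[of u z v] X base dist_sym[of u z] unfolding D_def P_def Q_def by simp
  have "a*b + a*b*D = 0" using coincide unfolding D_def by (metis distrib_left mult.right_neutral)
  hence ab: "a*b = a*b*D" by (rule add_eq_0_imp_eq)
  have "a*b*(P + Q + P*Q) = a*b*(D*(P + Q + P*Q))" by (subst ab) (simp add: mult.assoc)
  hence abJ: "a*b*(P + Q + P*Q) = a*b*D" using tri by simp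
  have "(a*b*D + a*(1+b)*P + (1+a)*b*Q) + (a*P + b*Q + (a*P)*(b*Q)) = a*b*D + a*b*(P+Q+P*Q)"
    by (simp add: bool_simps)
  also have "\<dots> = 0" using abJ by (simp add: add_self)
  finally have "a*b*D + a*(1+b)*P + (1+a)*b*Q = a*P + b*Q + (a*P)*(b*Q)" by (rule add_eq_0_imp_eq)
  thus ?thesis unfolding borth_def bnorm_def bjoin_def
    using dist_scaled[OF sa sb] norm_scaled[OF sa] norm_scaled[OF sb] D_def P_def Q_def by simp
qed

definition extend :: "(nat \<Rightarrow> 'x) \<Rightarrow> nat \<Rightarrow> nat \<Rightarrow> 'x" where
  "extend xs s i = (if i \<le> s then xs i else bsmul X d z (novelty xs i) (xs i))"

definition extend_weight :: "(nat \<Rightarrow> 'x) \<Rightarrow> nat \<Rightarrow> nat \<Rightarrow> 'b" where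
  "extend_weight xs s i = (if i \<le> s then 1 else novelty xs i)"

lemma scaled_extend: "xs i \<in> X \<Longrightarrow> scaled (extend_weight xs s i) (extend xs s i) (xs i)"
  using scaled_one scaled_bsmul by (simp add: extend_def extend_weight_def)

lemma extend_image:
  "s \<le> n \<Longrightarrow> xs ` {1..s} \<union> (\<lambda>i. bsmul X d z (novelty xs i) (xs i)) ` {s+1..n}
     = extend xs s ` {1..n}"
  by (force simp: extend_def)

text \<open>Orthogonality of the extended family: a later novel point coincides with nothing earlier.\<close>
lemma extend_orthogonal:
  assumes xX: "\<forall>i\<in>{1..n}. xs i \<in> X" and orth: "orthogonal_set X d z (xs ` {1..s})"
  shows "orthogonal_set X d z (extend xs s ` {1..n} - {z})"
proof -
  let ?e = "extend xs s"
  have eX: "?e i \<in> X" if "i \<in> {1..n}" for i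
    using scaled_extend[of xs i s] xX that unfolding scaled_def by simp
  have later: "borth d z (?e p) (?e q)" if "p \<in> {1..n}" "q \<in> {1..n}" "q < p" "s < p" for p q
  proof -
    have X: "xs p \<in> X" "xs q \<in> X" using xX that by auto
    have "extend_weight xs s p * extend_weight xs s q * (1 + d (xs p) (xs q))
        = extend_weight xs s q * (novelty xs p * (1 + d (xs p) (xs q)))"
      using that by (simp add: extend_weight_def algebra_simps)
    also have "\<dots> = 0" using novelty_coincide[of q p] that by simp
    finally show ?thesis
      by (rule orth_scaled[OF scaled_extend[of xs p, OF X(1)] scaled_extend[of xs q, OF X(2)]])
  qed
  have "borth d z (?e i) (?e k)" if "i \<in> {1..n}" "k \<in> {1..n}" "?e i \<noteq> ?e k" for i k
  proof -
    have "i \<noteq> k" using that(3) by blast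
    then consider "i \<le> s" "k \<le> s" | "k < i" "s < i" | "i < k" "s < k" by linarith
    thus ?thesis
    proof cases
      case 1
      hence "?e i \<in> xs ` {1..s}" "?e k \<in> xs ` {1..s}" using that by (auto simp: extend_def)
      thus ?thesis using orth that(3) unfolding orthogonal_set_def by blast
    next
      case 2 thus ?thesis using later that by blast
    next
      case 3 thus ?thesis using later[of k i] borth_sym eX that by blast
    qed
  qed
  thus ?thesis unfolding orthogonal_set_def using eX by blast
qed

lemma extend_spans:
  assumes xX: "\<forall>i\<in>{1..n}. xs i \<in> X" and span: "\<forall>y\<in>X. cc_of d ({z} \<union> xs ` {1..n}) y"
  shows "\<forall>y\<in>X. cc_of d ((extend xs s ` {1..n} - {z}) \<union> {z}) y"
proof
  fix y assume yX: "y \<in> X"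
  define S where "S = extend xs s ` {1..n} \<union> {z}"
  have "extend xs s i \<in> X" if "i \<in> {1..n}" for i
    using scaled_extend[of xs i s] xX that unfolding scaled_def by simp
  hence SX: "S \<subseteq> X" using base unfolding S_def by blast
  have x_span: "i \<in> {1..n} \<longrightarrow> cc_on d S (xs i) 1" for i
  proof (induction i rule: less_induct)
    case (less i)
    show ?case
    proof
      assume i: "i \<in> {1..n}"
      let ?a = "extend_weight xs s i"
      have old: "cc_on d S (xs i) (1 + ?a)"
      proof (cases "i \<le> s")
        case True
        thus ?thesis by (simp only: extend_weight_def if_True add_self cc_on_zero)
      next
        case False
        have earlier: "\<forall>j\<in>{1..<i}. xs j \<in> X \<and> cc_on d S (xs j) 1" using less.IH xX i by simp
        have "xs i \<in> X" using xX i by simp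
        from cc_on_complement_prod[OF finite_atLeastLessThan SX this earlier]
        have "cc_on d S (xs i) (1 + novelty xs i)" unfolding novelty_def .
        thus ?thesis using False by (simp add: extend_weight_def)
      qed
      have "?a * d (extend xs s i) (xs i) = 0" "extend xs s i \<in> X" "xs i \<in> X"
        using scaled_extend[of xs i s] xX i unfolding scaled_def by auto
      hence "?a * d (xs i) (extend xs s i) = 0" using dist_sym by metis
      hence new: "cc_on d S (xs i) ?a"
        using i by (intro cc_on_single[of "extend xs s i"]) (simp_all add: S_def)
      have "(1 + ?a) * ?a = 0" by (rule complement_disjoint)
      from cc_on_add[OF old new this] show "cc_on d S (xs i) 1"
        by (simp only: add.assoc add_self add_0_right)
    qed
  qed
  have "cc_on d S z 1" using dist_self[OF base] by (intro cc_on_single[of z]) (simp_all add: S_def)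
  hence "\<forall>t\<in>{z} \<union> xs ` {1..n}. cc_on d S t 1" using x_span by blast
  moreover have "{z} \<union> xs ` {1..n} \<subseteq> X" using xX base by blast
  moreover have "cc_on d ({z} \<union> xs ` {1..n}) y 1"
    using span yX by (simp only: cc_of_iff_cc_on[symmetric])
  ultimately have "cc_on d S y 1" by (intro cc_on_compose[OF SX _ yX])
  thus "cc_of d ((extend xs s ` {1..n} - {z}) \<union> {z}) y"
    by (simp add: cc_of_iff_cc_on S_def)
qed

theorem referential_extension:
  assumes "s \<le> n" and "\<forall>i\<in>{1..n}. xs i \<in> X"
    and "\<forall>y\<in>X. cc_of d ({z} \<union> xs ` {1..n}) y"
    and "orthogonal_set X d z (xs ` {1..s})"
  shows "referential X d z
           ((xs ` {1..s} \<union> (\<lambda>i. bsmul X d z (novelty xs i) (xs i)) ` {s+1..n}) - {z})"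
proof -
  have "referential X d z (extend xs s ` {1..n} - {z})"
    unfolding referential_def
    using extend_orthogonal[OF assms(2,4)] extend_spans[OF assms(2,3)] ..
  thus ?thesis unfolding extend_image[OF assms(1)] .
qed

text \<open>In a CFG-space every orthogonal set extends to a referential: list the orthogonal set
  first, then a finite generating set, and apply the construction.\<close>
corollary orthogonal_extends_to_referential:
  assumes cfg: "cfg_space X d" and orth: "orthogonal_set X d z R"
  shows "\<exists>R'. R \<subseteq> R' \<and> referential X d z R'"
proof -
  obtain F where F: "finite F" "F \<subseteq> X" "\<forall>y\<in>X. cc_of d F y"
    using cfg unfolding cfg_space_def by blast
  have R: "finite R" "R \<subseteq> X" "z \<notin> R" using orth unfolding orthogonal_set_def by auto
  obtain l f where l: "set l = R" and f: "set f = F" using finite_list R(1) F(1) by metis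
  define xs where "xs i = (l @ f) ! (i - 1)" for i
  define s where "s = length l"
  define n where "n = length (l @ f)"
  have first: "xs ` {1..s} = R"
    using image_nth_shift_take[of s "l @ f"] l by (simp add: xs_def s_def)
  have all: "xs ` {1..n} = R \<union> F"
    using image_nth_shift_take[of n "l @ f"] l f by (simp add: xs_def n_def)
  have "F \<subseteq> {z} \<union> xs ` {1..n}" using all by blast
  hence span: "\<forall>y\<in>X. cc_of d ({z} \<union> xs ` {1..n}) y" using F(3) cc_of_mono by metis
  have xX: "\<forall>i\<in>{1..n}. xs i \<in> X" using all R(2) F(2) by blast
  have sn: "s \<le> n" by (simp add: s_def n_def)
  define R' where "R' = (xs ` {1..s} \<union> (\<lambda>i. bsmul X d z (novelty xs i) (xs i)) ` {s+1..n}) - {z}"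
  have "referential X d z R'"
    unfolding R'_def using orth first by (intro referential_extension[OF sn xX span]) simp
  moreover have "R \<subseteq> R'" unfolding R'_def using first R(3) by blast
  ultimately show ?thesis by blast
qed

end

theorem mainTheorem12:
  fixes X :: "'x set" and d :: "'x \<Rightarrow> 'x \<Rightarrow> 'b::comm_ring_1" and z :: 'x
  assumes "boolean_ring TYPE('b)"
    and "bmetric X d"
    and "bconvex X d"
    and "z \<in> X"
  shows "(\<forall>n s (xs :: nat \<Rightarrow> 'x).
            s \<le> n \<and> (\<forall>i\<in>{1..n}. xs i \<in> X) \<and>
            (\<forall>y\<in>X. cc_of d ({z} \<union> xs ` {1..n}) y) \<and>
            orthogonal_set X d z (xs ` {1..s})
          \<longrightarrow> (\<exists>a :: nat \<Rightarrow> 'b.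
                 referential X d z
                   ((xs ` {1..s} \<union> (\<lambda>i. bsmul X d z (a i) (xs i)) ` {s+1..n}) - {z})))
       \<and> (cfg_space X d \<longrightarrow>
            (\<forall>R. orthogonal_set X d z R \<longrightarrow> (\<exists>R'. R \<subseteq> R' \<and> referential X d z R')))"
proof -
  interpret pointed_convex_space X d z
    using assms unfolding boolean_ring_def by unfold_locales auto
  show ?thesis
  proof (intro conjI allI impI)
    fix n s and xs :: "nat \<Rightarrow> 'x"
    assume "s \<le> n \<and> (\<forall>i\<in>{1..n}. xs i \<in> X) \<and> (\<forall>y\<in>X. cc_of d ({z} \<union> xs ` {1..n}) y)
      \<and> orthogonal_set X d z (xs ` {1..s})"
    thus "\<exists>a. referential X d z ((xs ` {1..s} \<union> (\<lambda>i. bsmul X d z (a i) (xs i)) ` {s+1..n}) - {z})"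
      by (intro exI[of _ "novelty xs"] referential_extension) auto
  next
    fix R assume "cfg_space X d" "orthogonal_set X d z R"
    thus "\<exists>R'. R \<subseteq> R' \<and> referential X d z R'" by (rule orthogonal_extends_to_referential)
  qed
qed

end
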